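(* Let $\mathbf{x}$ be a feasible solution of $\textsc{Dir-MC-Rel}$ and let $\theta$ be chosen uniformly at random from $(0,1)$. Then for every edge $e\in E$, $\Pr[e\in C(\theta)]\le 2x_e$.
   Context: $G=(V,E)$ is a directed graph with non-negative edge weights $w_e$ and distinct terminals $s_1,\dots,s_k$, $k\ge2$. For $i\neq j$, $\mathcal{P}_{ij}$ is the set of directed paths from $s_i$ to $s_j$ in $G$. $\textsc{Dir-MC-Rel}$: minimize $\sum_e w_e x_e$ s.t. $\sum_{e\in p}x_e\ge1$ for all $p\in\mathcal{P}_{ij}$, $i\ne j$, and $x\ge0$. Given feasible $\mathbf{x}$, form $G^+$ by adding new vertices $t_1,\dots,t_k$ and new edges $(t_i,s_j)$ for all $i\neq j$, each with $x$-value $0$. For vertices $u,v$ of $G^+$, $d(u,v)$ is the length of a shortest directed path from $u$ to $v$ in $G^+$ with edge lengths $\mathbf{x}$ ($+\infty$ if none). $B(v,r)=\{u: d(v,u)\le r\}$. For a vertex set $A$, $\delta^+(A)$ is the set of edges of $G^+$ with tail in $A$ and head not in $A$. For $\theta\in(0,1)$, $C(\theta)=\bigcup_{i=1}^k\delta^+(B(t_i,\theta))$. *)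

theory Defs
  imports "HOL-Analysis.Analysis"
begin

definition is_dpath :: "'a set \<Rightarrow> ('a \<times> 'a) set \<Rightarrow> 'a list \<Rightarrow> bool" where
  "is_dpath V E p \<longleftrightarrow> p \<noteq> [] \<and> distinct p \<and> set p \<subseteq> V \<and>
     (\<forall>i < length p - 1. (p ! i, p ! Suc i) \<in> E)"

definition path_edges :: "'a list \<Rightarrow> ('a \<times> 'a) list" where
  "path_edges p = zip p (tl p)"

definition dpaths :: "'a set \<Rightarrow> ('a \<times> 'a) set \<Rightarrow> 'a \<Rightarrow> 'a \<Rightarrow> 'a list set" where
  "dpaths V E u v = {p. is_dpath V E p \<and> hd p = u \<and> last p = v}"

definition path_len :: "('a \<times> 'a \<Rightarrow> real) \<Rightarrow> 'a list \<Rightarrow> real" where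
  "path_len x p = sum_list (map x (path_edges p))"

definition dir_mc_feasible ::
  "'a set \<Rightarrow> ('a \<times> 'a) set \<Rightarrow> (nat \<Rightarrow> 'a) \<Rightarrow> nat \<Rightarrow> ('a \<times> 'a \<Rightarrow> real) \<Rightarrow> bool" where
  "dir_mc_feasible V E s k x \<longleftrightarrow>
     (\<forall>e\<in>E. 0 \<le> x e) \<and>
     (\<forall>i<k. \<forall>j<k. i \<noteq> j \<longrightarrow> (\<forall>p \<in> dpaths V E (s i) (s j). 1 \<le> path_len x p))"

(* G+: original vertices Inl v, new vertices t_i = Inr i *)
definition Vplus :: "'a set \<Rightarrow> nat \<Rightarrow> ('a + nat) set" where
  "Vplus V k = Inl ` V \<union> Inr ` {..<k}"

definition Eplus :: "('a \<times> 'a) set \<Rightarrow> (nat \<Rightarrow> 'a) \<Rightarrow> nat \<Rightarrow> (('a + nat) \<times> ('a + nat)) set" where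
  "Eplus E s k = map_prod Inl Inl ` E \<union>
     {(Inr i, Inl (s j)) | i j. i < k \<and> j < k \<and> i \<noteq> j}"

fun xplus :: "('a \<times> 'a \<Rightarrow> real) \<Rightarrow> ('a + nat) \<times> ('a + nat) \<Rightarrow> real" where
  "xplus x (Inl a, Inl b) = x (a, b)"
| "xplus x _ = 0"

(* shortest-path distance in G+ w.r.t. lengths x (infinity if no path) *)
definition dplus ::
  "'a set \<Rightarrow> ('a \<times> 'a) set \<Rightarrow> (nat \<Rightarrow> 'a) \<Rightarrow> nat \<Rightarrow> ('a \<times> 'a \<Rightarrow> real)
    \<Rightarrow> 'a + nat \<Rightarrow> 'a + nat \<Rightarrow> ereal" where
  "dplus V E s k x u v =
     (INF p \<in> dpaths (Vplus V k) (Eplus E s k) u v. ereal (path_len (xplus x) p))"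

definition ballplus ::
  "'a set \<Rightarrow> ('a \<times> 'a) set \<Rightarrow> (nat \<Rightarrow> 'a) \<Rightarrow> nat \<Rightarrow> ('a \<times> 'a \<Rightarrow> real)
    \<Rightarrow> 'a + nat \<Rightarrow> real \<Rightarrow> ('a + nat) set" where
  "ballplus V E s k x v r = {u \<in> Vplus V k. dplus V E s k x v u \<le> ereal r}"

definition delta_out :: "('b \<times> 'b) set \<Rightarrow> 'b set \<Rightarrow> ('b \<times> 'b) set" where
  "delta_out F A = {(a, b) \<in> F. a \<in> A \<and> b \<notin> A}"

definition cut_C ::
  "'a set \<Rightarrow> ('a \<times> 'a) set \<Rightarrow> (nat \<Rightarrow> 'a) \<Rightarrow> nat \<Rightarrow> ('a \<times> 'a \<Rightarrow> real)
    \<Rightarrow> real \<Rightarrow> (('a + nat) \<times> ('a + nat)) set" where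
  "cut_C V E s k x \<theta> = (\<Union>i<k. delta_out (Eplus E s k) (ballplus V E s k x (Inr i) \<theta>))"

end

theory Submission
  imports Defs
begin

text \<open>For an edge \<open>e = (a, b)\<close>, the triangle inequality gives \<open>d(t\<^sub>i, b) \<le> d(t\<^sub>i, a) + x\<^sub>e\<close>, so \<open>e\<close>
  leaves \<open>B(t\<^sub>i, \<theta>)\<close> only for \<open>\<theta>\<close> in the window \<open>[d(t\<^sub>i, a), d(t\<^sub>i, a) + x\<^sub>e)\<close> of length
  at most \<open>x\<^sub>e\<close>. A shortest path from some \<open>t\<^sub>i\<close> to \<open>a\<close> starts with a zero edge \<open>(t\<^sub>i, s\<^sub>j)\<close>,
  and replacing \<open>t\<^sub>i\<close> by any \<open>t\<^sub>i\<^sub>'\<close> with \<open>i' \<noteq> j\<close> shows that all \<open>d(t\<^sub>i\<^sub>', a)\<close> with \<open>i' \<noteq> j\<close> are equal.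
  Hence only two distinct windows occur, and \<open>e \<in> C(\<theta>)\<close> has probability at most \<open>2 x\<^sub>e\<close>.\<close>

lemma path_edges_snoc: "xs \<noteq> [] \<Longrightarrow> path_edges (xs @ [v]) = path_edges xs @ [(last xs, v)]"
proof (induction xs)
  case (Cons a xs)
  then show ?case by (cases xs) (auto simp: path_edges_def)
qed simp

lemma path_edges_Cons: "q \<noteq> [] \<Longrightarrow> path_edges (u # q) = (u, hd q) # path_edges q"
  by (cases q) (auto simp: path_edges_def)

lemma path_edges_take: "path_edges (take n p) = take (n - 1) (path_edges p)"
  unfolding path_edges_def by (rule nth_equalityI) (auto simp: nth_tl)

lemma path_edges_subset: "is_dpath V E p \<Longrightarrow> set (path_edges p) \<subseteq> E"
  unfolding path_edges_def is_dpath_def by (auto simp: set_zip nth_tl)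

lemma is_dpath_take: "is_dpath V E p \<Longrightarrow> n < length p \<Longrightarrow> is_dpath V E (take (Suc n) p)"
  unfolding is_dpath_def by (auto dest: in_set_takeD)

lemma is_dpath_snoc:
  assumes "is_dpath V E p" "v \<in> V" "v \<notin> set p" "(last p, v) \<in> E"
  shows "is_dpath V E (p @ [v])"
proof -
  have "i = length p - 1" if "i < length p" "\<not> Suc i < length p" for i
    using that by linarith
  then show ?thesis
    using assms unfolding is_dpath_def by (auto simp: nth_append last_conv_nth less_Suc_eq)
qed

lemma is_dpath_replace_hd:
  assumes "is_dpath V E (u # q)" "q \<noteq> []" "u' \<in> V" "u' \<notin> set q" "(u', hd q) \<in> E"
  shows "is_dpath V E (u' # q)"
  using assms unfolding is_dpath_def
  by (auto simp: hd_conv_nth nth_Cons split: nat.splits)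

lemma finite_dpaths: "finite V \<Longrightarrow> finite (dpaths V E u v)"
  by (rule rev_finite_subset[OF finite_subset_distinct]) (auto simp: dpaths_def is_dpath_def)

lemma path_len_take_le:
  assumes "is_dpath V E p" "\<forall>e\<in>E. 0 \<le> w e"
  shows "path_len w (take n p) \<le> path_len w p"
proof -
  have "0 \<le> sum_list (map w (drop (n - 1) (path_edges p)))"
    using path_edges_subset[OF assms(1)] assms(2) by (fastforce intro: sum_list_nonneg dest: in_set_dropD)
  then show ?thesis
    unfolding path_len_def path_edges_take
    by (metis append_take_drop_id le_add_same_cancel1 map_append sum_list_append)
qed

definition graph_dist :: "'v set \<Rightarrow> ('v \<times> 'v) set \<Rightarrow> ('v \<times> 'v \<Rightarrow> real) \<Rightarrow> 'v \<Rightarrow> 'v \<Rightarrow> ereal" where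
  "graph_dist V E w u v = (INF p \<in> dpaths V E u v. ereal (path_len w p))"

lemma dplus_eq_graph_dist: "dplus V E s k x = graph_dist (Vplus V k) (Eplus E s k) (xplus x)"
  by (simp add: fun_eq_iff dplus_def graph_dist_def)

lemma graph_dist_no_path: "dpaths V E u v = {} \<Longrightarrow> graph_dist V E w u v = \<infinity>"
  by (simp add: graph_dist_def top_ereal_def)

lemma graph_dist_le_path_len: "p \<in> dpaths V E u v \<Longrightarrow> graph_dist V E w u v \<le> ereal (path_len w p)"
  unfolding graph_dist_def by (rule INF_lower)

lemma graph_dist_attained:
  assumes "finite V" "dpaths V E u v \<noteq> {}"
  obtains p where "p \<in> dpaths V E u v" "graph_dist V E w u v = ereal (path_len w p)"
proof -
  let ?A = "(\<lambda>p. ereal (path_len w p)) ` dpaths V E u v"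
  have "Inf ?A \<in> ?A"
    using finite_dpaths[OF assms(1)] assms(2) by (simp add: cInf_eq_Min)
  then show ?thesis using that unfolding graph_dist_def by auto
qed

lemma graph_dist_edge_le:
  assumes "finite V" "\<forall>e\<in>E. 0 \<le> w e" "(a, b) \<in> E" "b \<in> V"
  shows "graph_dist V E w u b \<le> graph_dist V E w u a + ereal (w (a, b))"
proof (cases "dpaths V E u a = {}")
  case True
  then show ?thesis by (simp add: graph_dist_no_path)
next
  case False
  then obtain p where p: "p \<in> dpaths V E u a" and dist_a: "graph_dist V E w u a = ereal (path_len w p)"
    using graph_dist_attained[OF assms(1)] by blast
  have p_path: "is_dpath V E p" "hd p = u" "last p = a" "p \<noteq> []"
    using p by (auto simp: dpaths_def is_dpath_def)
  have "graph_dist V E w u b \<le> ereal (path_len w p + w (a, b))"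
  proof (cases "b \<in> set p")
    case True
    then obtain n where n: "n < length p" "p ! n = b" by (auto simp: in_set_conv_nth)
    have "last (take (Suc n) p) = b"
      using n by (simp add: take_Suc_conv_app_nth)
    then have "take (Suc n) p \<in> dpaths V E u b"
      using is_dpath_take[OF p_path(1) n(1)] p_path by (simp add: dpaths_def hd_take)
    then have "graph_dist V E w u b \<le> ereal (path_len w (take (Suc n) p))"
      by (rule graph_dist_le_path_len)
    also have "\<dots> \<le> ereal (path_len w p + w (a, b))"
      using path_len_take_le[OF p_path(1) assms(2)] assms(2,3) by (simp add: add_increasing2)
    finally show ?thesis .
  next
    case False
    then have "p @ [b] \<in> dpaths V E u b"
      using is_dpath_snoc[OF p_path(1) assms(4)] assms(3) p_path by (simp add: dpaths_def)
    then have "graph_dist V E w u b \<le> ereal (path_len w (p @ [b]))"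
      by (rule graph_dist_le_path_len)
    also have "path_len w (p @ [b]) = path_len w p + w (a, b)"
      using p_path by (simp add: path_len_def path_edges_snoc)
    finally show ?thesis .
  qed
  then show ?thesis using dist_a by simp
qed

lemma Eplus_head_Inl: "(u, v) \<in> Eplus E s k \<Longrightarrow> \<exists>w. v = Inl w"
  unfolding Eplus_def by auto

lemma dpaths_Eplus_from_terminal:
  assumes "p \<in> dpaths (Vplus V k) (Eplus E s k) (Inr i) (Inl a)"
  obtains j q where "j < k" "p = Inr i # q" "q \<noteq> []" "hd q = Inl (s j)" "\<forall>v \<in> set q. \<exists>w. v = Inl w"
proof -
  have p_path: "is_dpath (Vplus V k) (Eplus E s k) p" "hd p = Inr i" "last p = Inl a"
    using assms by (auto simp: dpaths_def)
  then obtain q where p: "p = Inr i # q" unfolding is_dpath_def by (cases p) auto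
  have q: "q \<noteq> []" using p_path(3) p by auto
  have edges: "\<And>m. m < length q \<Longrightarrow> (p ! m, q ! m) \<in> Eplus E s k"
    using p_path(1) p by (auto simp: is_dpath_def)
  then have "(Inr i, hd q) \<in> Eplus E s k" using q p by (metis hd_conv_nth length_greater_0_conv nth_Cons_0)
  then obtain j where "j < k" "hd q = Inl (s j)" unfolding Eplus_def by auto
  moreover have "\<forall>v \<in> set q. \<exists>w. v = Inl w"
    using edges Eplus_head_Inl by (metis in_set_conv_nth)
  ultimately show ?thesis using that p q by blast
qed

lemma path_len_xplus_replace_terminal:
  "q \<noteq> [] \<Longrightarrow> hd q = Inl b \<Longrightarrow> path_len (xplus x) (Inr i' # q) = path_len (xplus x) (Inr i # q)"
  by (simp add: path_len_def path_edges_Cons)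

text \<open>A path from \<open>t\<^sub>i\<close> to \<open>a\<close> entering \<open>G\<close> at \<open>s\<^sub>j\<close> can start at any \<open>t\<^sub>i\<^sub>'\<close>, \<open>i' \<noteq> j\<close>, instead.\<close>
lemma dplus_terminal_le_path_len:
  assumes "p \<in> dpaths (Vplus V k) (Eplus E s k) (Inr i) (Inl a)"
  obtains j where "j < k"
    "\<And>i'. i' < k \<Longrightarrow> i' \<noteq> j \<Longrightarrow> dplus V E s k x (Inr i') (Inl a) \<le> ereal (path_len (xplus x) p)"
proof -
  obtain j q where j: "j < k" and p: "p = Inr i # q" "q \<noteq> []" "hd q = Inl (s j)"
    and q_Inl: "\<forall>v \<in> set q. \<exists>w. v = Inl w"
    using dpaths_Eplus_from_terminal[OF assms] by blast
  have "dplus V E s k x (Inr i') (Inl a) \<le> ereal (path_len (xplus x) p)" if "i' < k" "i' \<noteq> j" for i'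
  proof -
    have "Inr i' \<in> Vplus V k"
      using that by (simp add: Vplus_def)
    moreover have "Inr i' \<notin> set q"
      using q_Inl by blast
    moreover have "(Inr i', hd q) \<in> Eplus E s k"
      unfolding p(3) Eplus_def using that j by blast
    moreover have "is_dpath (Vplus V k) (Eplus E s k) (Inr i # q)"
      using assms p by (simp add: dpaths_def)
    ultimately have "is_dpath (Vplus V k) (Eplus E s k) (Inr i' # q)"
      using p(2) by (simp add: is_dpath_replace_hd)
    then have "Inr i' # q \<in> dpaths (Vplus V k) (Eplus E s k) (Inr i') (Inl a)"
      using assms p by (simp add: dpaths_def)
    then have "dplus V E s k x (Inr i') (Inl a) \<le> ereal (path_len (xplus x) (Inr i' # q))"
      unfolding dplus_eq_graph_dist by (rule graph_dist_le_path_len)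
    then show ?thesis
      using p path_len_xplus_replace_terminal[of q "s j" x i' i] by simp
  qed
  then show ?thesis using that j by blast
qed

lemma dplus_terminals_all_but_one_equal:
  assumes "finite V" "0 < k"
  obtains m j where "\<And>i. i < k \<Longrightarrow> i \<noteq> j \<Longrightarrow> dplus V E s k x (Inr i) (Inl a) = m"
proof -
  let ?d = "\<lambda>i. dplus V E s k x (Inr i) (Inl a)"
  let ?m = "Min (?d ` {..<k})"
  have "?m \<in> ?d ` {..<k}"
    using assms(2) by (intro Min_in) auto
  then obtain i0 where i0: "i0 < k" "?d i0 = ?m" by auto
  have min_le: "\<And>i. i < k \<Longrightarrow> ?m \<le> ?d i" by simp
  have finite_Vplus: "finite (Vplus V k)" using assms(1) by (simp add: Vplus_def)
  show ?thesis
  proof (cases "dpaths (Vplus V k) (Eplus E s k) (Inr i0) (Inl a) = {}")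
    case True
    then have "?d i = \<infinity>" if "i < k" for i
      using i0 min_le[OF that] by (simp add: dplus_eq_graph_dist graph_dist_no_path)
    then show ?thesis using that by blast
  next
    case False
    then obtain p where p: "p \<in> dpaths (Vplus V k) (Eplus E s k) (Inr i0) (Inl a)"
      and len_p: "?d i0 = ereal (path_len (xplus x) p)"
      using graph_dist_attained[OF finite_Vplus] by (metis dplus_eq_graph_dist)
    obtain j where "\<And>i. i < k \<Longrightarrow> i \<noteq> j \<Longrightarrow> ?d i \<le> ereal (path_len (xplus x) p)"
      using dplus_terminal_le_path_len[OF p] by blast
    then have "\<And>i. i < k \<Longrightarrow> i \<noteq> j \<Longrightarrow> ?d i = ?m"
      using min_le i0 len_p by (metis order_antisym)
    then show ?thesis using that by blast
  qed
qed

lemma Inl_edge_in_cut_C_iff: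
  assumes "(a, b) \<in> E" "E \<subseteq> V \<times> V"
  shows "(Inl a, Inl b) \<in> cut_C V E s k x \<theta> \<longleftrightarrow>
    (\<exists>i<k. dplus V E s k x (Inr i) (Inl a) \<le> ereal \<theta> \<and> \<not> dplus V E s k x (Inr i) (Inl b) \<le> ereal \<theta>)"
proof -
  have "Inl a \<in> Vplus V k" "Inl b \<in> Vplus V k" "(Inl a, Inl b) \<in> Eplus E s k"
    using assms unfolding Vplus_def Eplus_def by force+
  then show ?thesis unfolding cut_C_def delta_out_def ballplus_def by auto
qed

lemma dplus_Inl_edge_le:
  assumes "finite V" "E \<subseteq> V \<times> V" "\<forall>e\<in>E. 0 \<le> x e" "(a, b) \<in> E"
  shows "dplus V E s k x u (Inl b) \<le> dplus V E s k x u (Inl a) + ereal (x (a, b))"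
  using graph_dist_edge_le[of "Vplus V k" "Eplus E s k" "xplus x" "Inl a" "Inl b" u] assms
  by (force simp: dplus_eq_graph_dist Vplus_def Eplus_def)

definition ereal_window :: "ereal \<Rightarrow> real \<Rightarrow> real set" where
  "ereal_window c r = {\<theta>. c \<le> ereal \<theta> \<and> ereal \<theta> < c + ereal r}"

lemma ereal_window_cases: "ereal_window c r = {} \<or> (\<exists>l. ereal_window c r = {l..<l + r})"
  by (cases c) (auto simp: ereal_window_def)

lemma ereal_window_fmeasurable: "ereal_window c r \<in> fmeasurable lborel"
  using ereal_window_cases[of c r] by (cases "0 \<le> r") (auto simp: fmeasurable_def)

lemma measure_ereal_window_le: "0 \<le> r \<Longrightarrow> measure lborel (ereal_window c r) \<le> r"
  using ereal_window_cases[of c r] by (cases "0 \<le> r") (auto simp: fmeasurable_def)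

lemma measure_subset_two_ereal_windows_le:
  assumes "S \<in> sets borel" "S \<subseteq> ereal_window c r \<union> ereal_window c' r" "0 \<le> r"
  shows "measure lborel S \<le> 2 * r"
proof -
  have "measure lborel S \<le> measure lborel (ereal_window c r \<union> ereal_window c' r)"
    using assms ereal_window_fmeasurable by (intro measure_mono_fmeasurable) (auto intro: fmeasurable.Un)
  also have "\<dots> \<le> measure lborel (ereal_window c r) + measure lborel (ereal_window c' r)"
    using ereal_window_fmeasurable by (intro measure_Un_le) (simp_all add: fmeasurableD[where M = lborel, simplified])
  also have "\<dots> \<le> 2 * r"
    using add_mono[OF measure_ereal_window_le measure_ereal_window_le, of r r] assms(3) by simp
  finally show ?thesis .
qed

lemma cut_C_Inl_edge_event_borel:
  assumes "(a, b) \<in> E" "E \<subseteq> V \<times> V"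
  shows "{\<theta>. (Inl a, Inl b) \<in> cut_C V E s k x \<theta>} \<in> sets borel"
proof -
  let ?d = "\<lambda>v i. dplus V E s k x (Inr i) (Inl v)"
  have "{\<theta>. (Inl a, Inl b) \<in> cut_C V E s k x \<theta>} =
      (\<Union>i<k. {\<theta>. ?d a i \<le> ereal \<theta>} \<inter> {\<theta>. \<not> ?d b i \<le> ereal \<theta>})"
    using Inl_edge_in_cut_C_iff[OF assms] by auto
  then show ?thesis by simp
qed

text \<open>This is where the two windows come from: all terminals but \<open>t\<^sub>j\<close> share the window of \<open>m\<close>.\<close>
lemma cut_C_Inl_edge_event_subset_windows:
  assumes "finite V" "E \<subseteq> V \<times> V" "\<forall>e\<in>E. 0 \<le> x e" "(a, b) \<in> E" "0 < k"
  obtains c c' where "{\<theta>. (Inl a, Inl b) \<in> cut_C V E s k x \<theta>} \<subseteq>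
    ereal_window c (x (a, b)) \<union> ereal_window c' (x (a, b))"
proof -
  let ?d = "\<lambda>i v. dplus V E s k x (Inr i) (Inl v)"
  obtain m j where m: "\<And>i. i < k \<Longrightarrow> i \<noteq> j \<Longrightarrow> ?d i a = m"
    using dplus_terminals_all_but_one_equal[OF assms(1,5), of E s x a] by metis
  have "\<theta> \<in> ereal_window m (x (a, b)) \<union> ereal_window (?d j a) (x (a, b))"
    if cut: "(Inl a, Inl b) \<in> cut_C V E s k x \<theta>" for \<theta>
  proof -
    obtain i where i: "i < k" "?d i a \<le> ereal \<theta>" "\<not> ?d i b \<le> ereal \<theta>"
      using cut Inl_edge_in_cut_C_iff[OF assms(4,2), of s k x \<theta>] by blast
    moreover have "?d i b \<le> ?d i a + ereal (x (a, b))"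
      using dplus_Inl_edge_le[OF assms(1-4)] .
    ultimately show ?thesis
      using m by (cases "i = j") (auto simp: ereal_window_def)
  qed
  then show ?thesis using that by blast
qed

lemma measure_uniform_unit_interval:
  "S \<in> sets borel \<Longrightarrow> S \<subseteq> {0<..<1} \<Longrightarrow>
    measure (uniform_measure lborel {0<..<(1::real)}) S = measure lborel S"
  by (simp add: Int_absorb1)

theorem mainTheorem3:
  fixes V :: "'a set" and E :: "('a \<times> 'a) set" and s :: "nat \<Rightarrow> 'a" and k :: nat
    and x :: "'a \<times> 'a \<Rightarrow> real" and e :: "'a \<times> 'a"
  assumes "finite V" and "E \<subseteq> V \<times> V"
    and "2 \<le> k" and "inj_on s {..<k}" and "s ` {..<k} \<subseteq> V"
    and "dir_mc_feasible V E s k x"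
    and "e \<in> E"
  shows "{\<theta> \<in> {0<..<1}. map_prod Inl Inl e \<in> cut_C V E s k x \<theta>} \<in> sets lborel \<and>
         measure (uniform_measure lborel {0<..<(1::real)})
           {\<theta> \<in> {0<..<1}. map_prod Inl Inl e \<in> cut_C V E s k x \<theta>} \<le> 2 * x e"
proof -
  obtain a b where e: "e = (a, b)" by (cases e)
  define S where "S = {\<theta> \<in> {0<..<1}. map_prod Inl Inl e \<in> cut_C V E s k x \<theta>}"
  have nonneg: "\<forall>e\<in>E. 0 \<le> x e" using assms(6) by (simp add: dir_mc_feasible_def)
  have S_eq: "S = {0<..<1} \<inter> {\<theta>. (Inl a, Inl b) \<in> cut_C V E s k x \<theta>}"
    by (auto simp: S_def e)
  have ab: "(a, b) \<in> E" using assms(7) e by simp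
  have S_meas: "S \<in> sets borel"
    unfolding S_eq using cut_C_Inl_edge_event_borel[OF ab assms(2)] by (intro sets.Int) simp_all
  have "0 < k" using assms(3) by simp
  then obtain c c' where "S \<subseteq> ereal_window c (x e) \<union> ereal_window c' (x e)"
    using cut_C_Inl_edge_event_subset_windows[OF assms(1,2) nonneg ab, of k s] unfolding S_eq e
    by (meson inf.coboundedI2)
  then have "measure lborel S \<le> 2 * x e"
    using measure_subset_two_ereal_windows_le S_meas nonneg assms(7) by blast
  moreover have "measure (uniform_measure lborel {0<..<1}) S = measure lborel S"
    using S_meas by (intro measure_uniform_unit_interval) (auto simp: S_def)
  ultimately show ?thesis
    using S_meas unfolding S_def by simp
qed

end
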